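(* Let $h:\{0,1\}^t\times\{0,1\}^t\to\{0,1\}$ be a Boolean function, and let $G$ be the graph with vertex set $V=h^{-1}(0)$ in which distinct $(x,y),(x',y')\in V$ are adjacent iff $h(x,y')=1$ or $h(x',y)=1$. Then $\chi(G)\ge\mathrm{Cov}_0(h)$. Moreover, if $h^{-1}(1)=\bigsqcup_{i=1}^m A_i\times B_i$ is a partition into $1$-monochromatic rectangles, then the bicliques $Q_i=S_i^-\times S_i^+$, where $S_i^-=\{(x,y)\in V: x\in A_i\}$ and $S_i^+=\{(x,y)\in V:y\in B_i\}$, are subgraphs of $G$ and every edge of $G$ belongs to at least one and at most two of $Q_1,\dots,Q_m$.
   Context: A $b$-monochromatic rectangle for $h$ is a set $A\times B$ with $A,B\subseteq\{0,1\}^t$ on which $h\equiv b$; $\mathrm{Cov}_0(h)$ is the minimum number of $0$-monochromatic rectangles whose union is $h^{-1}(0)$. A biclique $S^-\times S^+$ denotes the complete bipartite graph with all edges between $u\in S^-$ and $v\in S^+$. $\chi(G)$ is the chromatic number. *)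

theory Defs
  imports Main
begin

text \<open>Boolean cube {0,1}^t as bit lists of length t; True = 1.\<close>
definition cube :: "nat \<Rightarrow> bool list set" where
  "cube t = {x. length x = t}"

definition Vset :: "(bool list \<Rightarrow> bool list \<Rightarrow> bool) \<Rightarrow> nat \<Rightarrow> (bool list \<times> bool list) set" where
  "Vset h t = {(x, y). x \<in> cube t \<and> y \<in> cube t \<and> \<not> h x y}"

definition adjG :: "(bool list \<Rightarrow> bool list \<Rightarrow> bool) \<Rightarrow> nat \<Rightarrow>
    bool list \<times> bool list \<Rightarrow> bool list \<times> bool list \<Rightarrow> bool" where
  "adjG h t u v \<longleftrightarrow> u \<in> Vset h t \<and> v \<in> Vset h t \<and> u \<noteq> v \<and>
     (h (fst u) (snd v) \<or> h (fst v) (snd u))"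

definition chromatic_number :: "'v set \<Rightarrow> ('v \<Rightarrow> 'v \<Rightarrow> bool) \<Rightarrow> nat" where
  "chromatic_number V E = (LEAST k. \<exists>c :: 'v \<Rightarrow> nat.
      (\<forall>v\<in>V. c v < k) \<and> (\<forall>u\<in>V. \<forall>v\<in>V. E u v \<longrightarrow> c u \<noteq> c v))"

definition mono_rect :: "(bool list \<Rightarrow> bool list \<Rightarrow> bool) \<Rightarrow> nat \<Rightarrow> bool \<Rightarrow>
    bool list set \<Rightarrow> bool list set \<Rightarrow> bool" where
  "mono_rect h t b A B \<longleftrightarrow> A \<subseteq> cube t \<and> B \<subseteq> cube t \<and> (\<forall>x\<in>A. \<forall>y\<in>B. h x y = b)"

definition Cov0 :: "(bool list \<Rightarrow> bool list \<Rightarrow> bool) \<Rightarrow> nat \<Rightarrow> nat" where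
  "Cov0 h t = (LEAST k. \<exists>A B :: nat \<Rightarrow> bool list set.
      (\<forall>i<k. mono_rect h t False (A i) (B i)) \<and> (\<Union>i<k. A i \<times> B i) = Vset h t)"

definition biclique_edge :: "'v set \<Rightarrow> 'v set \<Rightarrow> 'v \<Rightarrow> 'v \<Rightarrow> bool" where
  "biclique_edge S T u v \<longleftrightarrow> (u \<in> S \<and> v \<in> T) \<or> (v \<in> S \<and> u \<in> T)"

end

theory Submission
  imports Defs
begin

text \<open>A colour class I of G is a set of zeros of h containing no edge, which says exactly
  that h vanishes on every mixed pair (fst u, snd v) with u, v in I; so the rectangle
  fst ` I \<times> snd ` I is 0-monochromatic, and the colour classes of a proper colouring form a
  0-cover of the same size. For the second part, the edge {u, v} lies in Q_i iff one of the
  two mixed pairs (fst u, snd v), (fst v, snd u) lies in A_i \<times> B_i; adjacency puts at least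
  one of them in the 1-set of h, and disjointness of the rectangles puts each of them in at
  most one.\<close>

lemma finite_cube: "finite (cube t)"
  using finite_lists_length_eq[of "UNIV :: bool set" t] by (simp add: cube_def)

lemma finite_Vset: "finite (Vset h t)"
proof -
  have "Vset h t \<subseteq> cube t \<times> cube t"
    by (auto simp: Vset_def)
  then show ?thesis
    using finite_cube by (blast intro: finite_subset)
qed

lemma chromatic_number_colouring:
  assumes "finite V" and loopless: "\<And>u v. E u v \<Longrightarrow> u \<noteq> v"
  shows "\<exists>c :: 'v \<Rightarrow> nat. (\<forall>v\<in>V. c v < chromatic_number V E) \<and>
           (\<forall>u\<in>V. \<forall>v\<in>V. E u v \<longrightarrow> c u \<noteq> c v)"
proof -
  obtain c :: "'v \<Rightarrow> nat" and n where c: "c ` V = {..<n}" "inj_on c V"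
    using finite_imp_inj_to_nat_seg[OF \<open>finite V\<close>] by (metis lessThan_def)
  have "(\<forall>v\<in>V. c v < n) \<and> (\<forall>u\<in>V. \<forall>v\<in>V. E u v \<longrightarrow> c u \<noteq> c v)"
    using c by (auto simp: inj_on_def dest: loopless)
  then have "\<exists>c :: 'v \<Rightarrow> nat. (\<forall>v\<in>V. c v < n) \<and> (\<forall>u\<in>V. \<forall>v\<in>V. E u v \<longrightarrow> c u \<noteq> c v)"
    by blast
  then show ?thesis
    unfolding chromatic_number_def by (rule LeastI)
qed

lemma mono_rect_False_subset_Vset:
  "mono_rect h t False A B \<Longrightarrow> A \<times> B \<subseteq> Vset h t"
  by (auto simp: mono_rect_def Vset_def)

lemma independent_set_mono_rect:
  assumes I: "I \<subseteq> Vset h t" and indep: "\<forall>u\<in>I. \<forall>v\<in>I. \<not> adjG h t u v"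
  shows "mono_rect h t False (fst ` I) (snd ` I)"
proof -
  have "\<not> h (fst u) (snd v)" if "u \<in> I" "v \<in> I" for u v
  proof (cases "u = v")
    case True
    then show ?thesis using that I by (auto simp: Vset_def)
  next
    case False
    then show ?thesis using that I indep by (auto simp: adjG_def)
  qed
  moreover have "fst ` I \<subseteq> cube t" "snd ` I \<subseteq> cube t"
    using I by (auto simp: Vset_def)
  ultimately show ?thesis
    by (auto simp: mono_rect_def)
qed

lemma Cov0_le_colours:
  assumes range: "\<forall>v\<in>Vset h t. c v < k"
    and proper: "\<forall>u\<in>Vset h t. \<forall>v\<in>Vset h t. adjG h t u v \<longrightarrow> c u \<noteq> c v"
  shows "Cov0 h t \<le> k"
proof -
  define I where "I i = {v \<in> Vset h t. c v = i}" for i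
  have mono: "mono_rect h t False (fst ` I i) (snd ` I i)" for i
    by (intro independent_set_mono_rect) (auto simp: I_def dest: proper[rule_format])
  have "(\<Union>i<k. fst ` I i \<times> snd ` I i) \<subseteq> Vset h t"
    using mono mono_rect_False_subset_Vset by blast
  moreover have "p \<in> fst ` I (c p) \<times> snd ` I (c p)" if "p \<in> Vset h t" for p
    using that by (auto simp: I_def mem_Times_iff intro!: imageI)
  then have "Vset h t \<subseteq> (\<Union>i<k. fst ` I i \<times> snd ` I i)"
    using range by blast
  ultimately have "(\<Union>i<k. fst ` I i \<times> snd ` I i) = Vset h t"
    by blast
  then show ?thesis
    unfolding Cov0_def using mono
    by (intro Least_le exI[where x = "\<lambda>i. fst ` I i"] exI[where x = "\<lambda>i. snd ` I i"]) simp
qed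

lemma adjG_imp_neq: "adjG h t u v \<Longrightarrow> u \<noteq> v"
  by (simp add: adjG_def)

lemma Cov0_le_chromatic_number: "Cov0 h t \<le> chromatic_number (Vset h t) (adjG h t)"
proof -
  from chromatic_number_colouring[OF finite_Vset[of h t] adjG_imp_neq[of h t]]
  obtain c where "\<forall>v\<in>Vset h t. c v < chromatic_number (Vset h t) (adjG h t)"
    "\<forall>u\<in>Vset h t. \<forall>v\<in>Vset h t. adjG h t u v \<longrightarrow> c u \<noteq> c v"
    by blast
  then show ?thesis
    by (rule Cov0_le_colours)
qed

lemma biclique_edge_rect_iff:
  "biclique_edge {p \<in> V. fst p \<in> A} {p \<in> V. snd p \<in> B} u v \<longleftrightarrow>
     u \<in> V \<and> v \<in> V \<and> ((fst u, snd v) \<in> A \<times> B \<or> (fst v, snd u) \<in> A \<times> B)"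
  by (auto simp: biclique_edge_def)

lemma biclique_edge_imp_adjG:
  assumes "mono_rect h t True A B"
    and "biclique_edge {p \<in> Vset h t. fst p \<in> A} {p \<in> Vset h t. snd p \<in> B} u v"
  shows "adjG h t u v"
proof -
  have "u \<in> Vset h t" "v \<in> Vset h t" "h (fst u) (snd v) \<or> h (fst v) (snd u)"
    using assms by (auto simp: biclique_edge_rect_iff mono_rect_def)
  moreover from this have "u \<noteq> v"
    by (auto simp: Vset_def)
  ultimately show ?thesis
    by (simp add: adjG_def)
qed

lemma adjG_in_some_biclique:
  fixes m :: nat
  assumes cover: "(\<Union>i<m. A i \<times> B i) = {(x, y). x \<in> cube t \<and> y \<in> cube t \<and> h x y}"
    and "adjG h t u v"
  shows "1 \<le> card {i. i < m \<and> biclique_edge {p \<in> Vset h t. fst p \<in> A i} {p \<in> Vset h t. snd p \<in> B i} u v}"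
proof -
  have uv: "u \<in> Vset h t" "v \<in> Vset h t" "h (fst u) (snd v) \<or> h (fst v) (snd u)"
    using \<open>adjG h t u v\<close> by (auto simp: adjG_def)
  then have "(fst u, snd v) \<in> (\<Union>i<m. A i \<times> B i) \<or> (fst v, snd u) \<in> (\<Union>i<m. A i \<times> B i)"
    unfolding cover by (auto simp: Vset_def)
  then obtain i where "i < m"
    "biclique_edge {p \<in> Vset h t. fst p \<in> A i} {p \<in> Vset h t. snd p \<in> B i} u v"
    using uv by (auto simp: biclique_edge_rect_iff)
  then show ?thesis
    by (simp add: Suc_le_eq card_gt_0_iff) blast
qed

lemma card_disjoint_rects_containing_le_1:
  fixes m :: nat
  assumes "\<forall>i<m. \<forall>j<m. i \<noteq> j \<longrightarrow> (A i \<times> B i) \<inter> (A j \<times> B j) = {}"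
  shows "card {i. i < m \<and> q \<in> A i \<times> B i} \<le> 1"
proof -
  have "finite {i. i < m \<and> q \<in> A i \<times> B i}"
    by (simp add: finite_Collect_conjI)
  then show ?thesis
    using assms by (auto simp: card_le_Suc0_iff_eq)
qed

lemma card_bicliques_containing_edge_le_2:
  fixes m :: nat
  assumes disjoint: "\<forall>i<m. \<forall>j<m. i \<noteq> j \<longrightarrow> (A i \<times> B i) \<inter> (A j \<times> B j) = {}"
  shows "card {i. i < m \<and> biclique_edge {p \<in> V. fst p \<in> A i} {p \<in> V. snd p \<in> B i} u v} \<le> 2"
proof -
  let ?R = "\<lambda>q. {i. i < m \<and> q \<in> A i \<times> B i}"
  have "card {i. i < m \<and> biclique_edge {p \<in> V. fst p \<in> A i} {p \<in> V. snd p \<in> B i} u v}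
        \<le> card (?R (fst u, snd v) \<union> ?R (fst v, snd u))"
    by (intro card_mono) (auto simp: biclique_edge_rect_iff)
  also have "\<dots> \<le> card (?R (fst u, snd v)) + card (?R (fst v, snd u))"
    by (rule card_Un_le)
  also have "\<dots> \<le> 2"
    using card_disjoint_rects_containing_le_1[OF disjoint, of "(fst u, snd v)"]
      card_disjoint_rects_containing_le_1[OF disjoint, of "(fst v, snd u)"]
    by linarith
  finally show ?thesis .
qed

theorem mainTheorem11:
  fixes h :: "bool list \<Rightarrow> bool list \<Rightarrow> bool" and t :: nat
  shows "chromatic_number (Vset h t) (adjG h t) \<ge> Cov0 h t \<and>
    (\<forall>(m::nat) (A::nat \<Rightarrow> bool list set) (B::nat \<Rightarrow> bool list set).
       (\<forall>i<m. mono_rect h t True (A i) (B i)) \<longrightarrow>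
       (\<forall>i<m. \<forall>j<m. i \<noteq> j \<longrightarrow> (A i \<times> B i) \<inter> (A j \<times> B j) = {}) \<longrightarrow>
       (\<Union>i<m. A i \<times> B i) = {(x, y). x \<in> cube t \<and> y \<in> cube t \<and> h x y} \<longrightarrow>
       (\<forall>i<m. \<forall>u v. biclique_edge {p \<in> Vset h t. fst p \<in> A i} {p \<in> Vset h t. snd p \<in> B i} u v
                  \<longrightarrow> adjG h t u v)
       \<and> (\<forall>u v. adjG h t u v \<longrightarrow>
            1 \<le> card {i. i < m \<and> biclique_edge {p \<in> Vset h t. fst p \<in> A i} {p \<in> Vset h t. snd p \<in> B i} u v}
          \<and> card {i. i < m \<and> biclique_edge {p \<in> Vset h t. fst p \<in> A i} {p \<in> Vset h t. snd p \<in> B i} u v} \<le> 2))"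
proof (intro conjI allI impI)
  show "Cov0 h t \<le> chromatic_number (Vset h t) (adjG h t)"
    by (rule Cov0_le_chromatic_number)
next
  fix m i :: nat and A B :: "nat \<Rightarrow> bool list set" and u v :: "bool list \<times> bool list"
  assume "\<forall>i<m. mono_rect h t True (A i) (B i)" "i < m"
    "biclique_edge {p \<in> Vset h t. fst p \<in> A i} {p \<in> Vset h t. snd p \<in> B i} u v"
  then show "adjG h t u v"
    by (blast intro: biclique_edge_imp_adjG)
next
  fix m :: nat and A B :: "nat \<Rightarrow> bool list set" and u v :: "bool list \<times> bool list"
  assume "(\<Union>i<m. A i \<times> B i) = {(x, y). x \<in> cube t \<and> y \<in> cube t \<and> h x y}" "adjG h t u v"
  then show "1 \<le> card {i. i < m \<and> biclique_edge {p \<in> Vset h t. fst p \<in> A i} {p \<in> Vset h t. snd p \<in> B i} u v}"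
    by (rule adjG_in_some_biclique)
next
  fix m :: nat and A B :: "nat \<Rightarrow> bool list set" and u v :: "bool list \<times> bool list"
  assume "\<forall>i<m. \<forall>j<m. i \<noteq> j \<longrightarrow> (A i \<times> B i) \<inter> (A j \<times> B j) = {}"
  then show "card {i. i < m \<and> biclique_edge {p \<in> Vset h t. fst p \<in> A i} {p \<in> Vset h t. snd p \<in> B i} u v} \<le> 2"
    by (rule card_bicliques_containing_edge_le_2)
qed

end
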